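(* Let $N\ge2$ and let $v_1,\dots,v_N\in\mathbb{R}^3\setminus\{0\}$ satisfy $v_i/\|v_i\|\neq\pm v_j/\|v_j\|$ for $i\neq j$, and let $K=D_{v_1}+\dots+D_{v_N}$. For each $i$ let $q_i^+$ (resp. $q_i^-$) be the unique point of $\sum_{j\neq i}D_{v_j}$ maximizing (resp. minimizing) $\langle\cdot,v_i\rangle$; the $2N$ discs $D_{v_i}+\{q_i^\pm\}$ lie in $\partial K$. Let $\mathcal{S}:=\partial K\setminus\bigcup_{i=1}^N\big((D_{v_i}+\{q_i^+\})\cup(D_{v_i}+\{q_i^-\})\big)$. Then $\mathcal{S}$ has exactly two connected components if and only if $v_1,\dots,v_N$ lie in a common plane through the origin. Otherwise $\mathcal{S}$ is connected and the $2N$ boundary discs are pairwise disjoint.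
   Context: For $v\in\mathbb{R}^3$, $D_v$ denotes the closed disc in the plane $v^\perp$ centered at $0$ of radius $\|v\|$. Sums are Minkowski sums; a finite Minkowski sum of such discs is called a discotope. *)

theory Defs
  imports "HOL-Analysis.Analysis"
begin

definition disc :: "real^3 \<Rightarrow> (real^3) set" where
  "disc v = {x. x \<bullet> v = 0 \<and> norm x \<le> norm v}"

definition disc_sum :: "(nat \<Rightarrow> real^3) \<Rightarrow> nat set \<Rightarrow> (real^3) set" where
  "disc_sum v J = {x. \<exists>y. (\<forall>j\<in>J. y j \<in> disc (v j)) \<and> x = (\<Sum>j\<in>J. y j)}"

definition discotope :: "(nat \<Rightarrow> real^3) \<Rightarrow> nat \<Rightarrow> (real^3) set" where
  "discotope v N = disc_sum v {..<N}"

definition q_pt :: "(nat \<Rightarrow> real^3) \<Rightarrow> nat \<Rightarrow> nat \<Rightarrow> bool \<Rightarrow> real^3" where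
  "q_pt v N i s = (THE q. q \<in> disc_sum v ({..<N} - {i}) \<and>
      (\<forall>x\<in>disc_sum v ({..<N} - {i}).
         (if s then x \<bullet> v i \<le> q \<bullet> v i else q \<bullet> v i \<le> x \<bullet> v i)))"

definition bdisc :: "(nat \<Rightarrow> real^3) \<Rightarrow> nat \<Rightarrow> nat \<Rightarrow> bool \<Rightarrow> (real^3) set" where
  "bdisc v N i s = (\<lambda>x. x + q_pt v N i s) ` disc (v i)"

definition S_set :: "(nat \<Rightarrow> real^3) \<Rightarrow> nat \<Rightarrow> (real^3) set" where
  "S_set v N = frontier (discotope v N) - (\<Union>i<N. bdisc v N i True \<union> bdisc v N i False)"

end

theory Submission
  imports Defs
begin

(*
  For a direction w parallel to none of the v j, the functional x \<bullet> w attains its maximum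
  on K at a single point, the sum of its maximizers on the individual discs. This support point
  depends continuously on w, and its domain, the complement of the finitely many lines through
  the v j, is connected. Every other boundary point of K maximizes x \<bullet> v i or x \<bullet> - v i
  and therefore lies on one of the 2N boundary discs.

  If a support point lies on the boundary disc of v i, then on every other disc the maximizers
  for w and for v i coincide, which forces all v j into the plane spanned by w and v i; the same
  argument shows that two boundary discs can only meet when the v j are coplanar. So if they
  are not coplanar, S is the connected image of the support point map. If all v j are orthogonal
  to n, the support point of w lies on the same side of the plane orthogonal to n as w when
  n \<bullet> w \<noteq> 0, and on a boundary disc when n \<bullet> w = 0; hence S is the disjoint union of the
  images of the two open half-spaces, each connected and separated by that plane.
*)

section \<open>Complements of finitely many lines\<close>

lemma open_not_subset_finite_lines:
  fixes L :: "'a::euclidean_space set"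
  assumes "finite L" "DIM('a) \<ge> 2" "open U" "U \<noteq> {}"
  obtains w where "w \<in> U" "w \<notin> (\<Union>l\<in>L. span {l})"
proof -
  have "negligible (\<Union>l\<in>L. span {l})"
    using assms(1,2) by (intro negligible_Union) (auto intro!: negligible_lowdim)
  then have "\<not> U \<subseteq> (\<Union>l\<in>L. span {l})"
    using open_not_negligible[OF assms(3,4)] negligible_subset by blast
  then show ?thesis using that by blast
qed

lemma countable_hyperplane_Int_finite_lines:
  fixes L :: "'a::real_inner set"
  assumes "finite L"
  shows "countable ({w. e \<bullet> w = 1} \<inter> (\<Union>l\<in>L. span {l}))"
proof -
  have "{w. e \<bullet> w = 1} \<inter> (\<Union>l\<in>L. span {l}) \<subseteq> (\<lambda>l. (1 / (e \<bullet> l)) *\<^sub>R l) ` L"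
  proof
    fix w assume "w \<in> {w. e \<bullet> w = 1} \<inter> (\<Union>l\<in>L. span {l})"
    then obtain l k where "l \<in> L" "w = k *\<^sub>R l" "k * (e \<bullet> l) = 1"
      by (fastforce simp: span_singleton)
    moreover from this(3) have "k = 1 / (e \<bullet> l)"
      by (metis mult_zero_right nonzero_eq_divide_eq zero_neq_one)
    ultimately show "w \<in> (\<lambda>l. (1 / (e \<bullet> l)) *\<^sub>R l) ` L" by blast
  qed
  then show ?thesis using assms by (meson countable_finite countable_subset finite_imageI)
qed

lemma scaleR_image_hyperplane_diff_lines:
  fixes L :: "'a::real_inner set"
  defines "X \<equiv> \<Union>l\<in>L. span {l}"
  shows "(\<lambda>z. fst z *\<^sub>R snd z) ` ({0::real<..} \<times> ({w. e \<bullet> w = 1} - X)) = {w. e \<bullet> w > 0} - X"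
proof (intro set_eqI iffI)
  fix w assume w: "w \<in> {w. e \<bullet> w > 0} - X"
  then have ew: "e \<bullet> w > 0" by simp
  have "(1 / (e \<bullet> w)) *\<^sub>R w \<notin> X"
  proof
    assume "(1 / (e \<bullet> w)) *\<^sub>R w \<in> X"
    then obtain l where "l \<in> L" and l: "(1 / (e \<bullet> w)) *\<^sub>R w \<in> span {l}" by (auto simp: X_def)
    from l have "(e \<bullet> w) *\<^sub>R ((1 / (e \<bullet> w)) *\<^sub>R w) \<in> span {l}" by (rule span_mul)
    then show False using w ew \<open>l \<in> L\<close> by (simp add: X_def)
  qed
  then have "(e \<bullet> w, (1 / (e \<bullet> w)) *\<^sub>R w) \<in> {0::real<..} \<times> ({w. e \<bullet> w = 1} - X)"
    using ew by simp
  then show "w \<in> (\<lambda>z. fst z *\<^sub>R snd z) ` ({0::real<..} \<times> ({w. e \<bullet> w = 1} - X))"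
    by (rule rev_image_eqI) (use ew in simp)
next
  fix w assume "w \<in> (\<lambda>z. fst z *\<^sub>R snd z) ` ({0::real<..} \<times> ({w. e \<bullet> w = 1} - X))"
  then obtain t u where tu: "t > 0" "e \<bullet> u = 1" "u \<notin> X" "w = t *\<^sub>R u" by auto
  have "w \<notin> X"
  proof
    assume "w \<in> X"
    then obtain l where "l \<in> L" and l: "t *\<^sub>R u \<in> span {l}" using tu(4) by (auto simp: X_def)
    from l have "(1 / t) *\<^sub>R (t *\<^sub>R u) \<in> span {l}" by (rule span_mul)
    then show False using tu \<open>l \<in> L\<close> by (simp add: X_def)
  qed
  then show "w \<in> {w. e \<bullet> w > 0} - X" using tu by simp
qed

text \<open>Radial projection identifies the open half-space with a product of a ray and an affine
  hyperplane, which meets each line in at most one point.\<close>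

lemma connected_halfspace_diff_finite_lines:
  fixes L :: "'a::euclidean_space set"
  assumes "finite L" "DIM('a) \<ge> 3" "e \<noteq> 0"
  shows "connected ({w. e \<bullet> w > 0} - (\<Union>l\<in>L. span {l}))"
proof -
  let ?H = "{w. e \<bullet> w = 1}" and ?X = "\<Union>l\<in>L. span {l}"
  have "\<not> collinear ?H" using assms(2,3) by (simp add: collinear_aff_dim)
  then have "connected (?H - (?H \<inter> ?X))"
    using countable_hyperplane_Int_finite_lines[OF assms(1)]
    by (intro connected_convex_diff_countable convex_hyperplane)
  moreover have "?H - (?H \<inter> ?X) = ?H - ?X" by blast
  ultimately have "connected ({0::real<..} \<times> (?H - ?X))"
    by (simp add: connected_Times is_interval_connected)
  moreover have "continuous_on ({0::real<..} \<times> (?H - ?X)) (\<lambda>z. fst z *\<^sub>R snd z)"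
    by (intro continuous_intros)
  ultimately have "connected ((\<lambda>z. fst z *\<^sub>R snd z) ` ({0::real<..} \<times> (?H - ?X)))"
    by (rule connected_continuous_image[rotated])
  then show ?thesis by (simp only: scaleR_image_hyperplane_diff_lines)
qed

lemma halfspaces_diff_finite_lines_meet:
  fixes L :: "'a::euclidean_space set"
  assumes "finite L" "DIM('a) \<ge> 2" "e \<noteq> 0" "f \<noteq> 0" "e \<bullet> f \<ge> 0"
  shows "({w. e \<bullet> w > 0} - (\<Union>l\<in>L. span {l})) \<inter> ({w. f \<bullet> w > 0} - (\<Union>l\<in>L. span {l})) \<noteq> {}"
proof -
  have "e + f \<in> {w. e \<bullet> w > 0} \<inter> {w. f \<bullet> w > 0}"
    using assms(3-5) by (auto simp: inner_add_right inner_commute intro: add_pos_nonneg add_nonneg_pos)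
  then obtain w where "w \<in> {w. e \<bullet> w > 0} \<inter> {w. f \<bullet> w > 0}" "w \<notin> (\<Union>l\<in>L. span {l})"
    using open_not_subset_finite_lines[OF assms(1,2) open_Int[OF open_halfspace_gt open_halfspace_gt]]
    by blast
  then show ?thesis by blast
qed

lemma connected_complement_finite_lines:
  fixes L :: "'a::euclidean_space set"
  assumes fin: "finite L" and dim: "DIM('a) \<ge> 3"
  shows "connected (- (\<Union>l\<in>L. span {l}))"
proof (cases "L = {}")
  case False
  define C where "C e = {w. e \<bullet> w > 0} - (\<Union>l\<in>L. span {l})" for e :: 'a
  have conn: "connected (C e)" if "e \<noteq> 0" for e
    unfolding C_def using connected_halfspace_diff_finite_lines[OF fin dim that] .
  have meet: "C e \<inter> C f \<noteq> {}" if "e \<noteq> 0" "f \<noteq> 0" "e \<bullet> f \<ge> 0" for e f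
    unfolding C_def using dim by (intro halfspaces_diff_finite_lines_meet fin that) simp
  have "\<not> card (Basis :: 'a set) \<le> Suc 0" using dim by simp
  then obtain b c :: 'a where "b \<in> Basis" "c \<in> Basis" "b \<noteq> c"
    by (meson card_le_Suc0_iff_eq finite_Basis)
  then have bc: "b \<noteq> 0" "c \<noteq> 0" "b \<bullet> c = 0" by (auto simp: nonzero_Basis inner_not_same_Basis)
  text \<open>The four half-spaces along \<open>\<plusminus>b\<close> and \<open>\<plusminus>c\<close> form a connected chain that every
    other half-space meets.\<close>
  define T where "T = C b \<union> C c \<union> C (- b) \<union> C (- c)"
  have "C b \<inter> C c \<noteq> {}" "C c \<inter> C (- b) \<noteq> {}" "C (- b) \<inter> C (- c) \<noteq> {}"
    using meet bc by (simp_all add: inner_commute)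
  then have "connected T" unfolding T_def using bc by (intro connected_Un conn) auto
  have "T \<noteq> {}" using meet[of b c] bc by (auto simp: T_def)
  have "connected (\<Union>e\<in>- {0}. T \<union> C e)"
  proof (rule connected_Union)
    fix S assume "S \<in> (\<lambda>e. T \<union> C e) ` (- {0})"
    then obtain e where e: "e \<noteq> 0" "S = T \<union> C e" by auto
    have "C e \<inter> C b \<noteq> {} \<or> C e \<inter> C (- b) \<noteq> {}"
      using meet[OF e(1) bc(1)] meet[of e "- b"] e(1) bc(1) by force
    then have "T \<inter> C e \<noteq> {}" by (auto simp: T_def)
    then show "connected S" using e \<open>connected T\<close> conn by (simp add: connected_Un)
  qed (use \<open>T \<noteq> {}\<close> in auto)
  moreover have "(\<Union>e\<in>- {0}. T \<union> C e) = - (\<Union>l\<in>L. span {l})"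
  proof
    show "(\<Union>e\<in>- {0}. T \<union> C e) \<subseteq> - (\<Union>l\<in>L. span {l})"
      by (auto simp only: T_def C_def)
    show "- (\<Union>l\<in>L. span {l}) \<subseteq> (\<Union>e\<in>- {0}. T \<union> C e)"
    proof
      fix w assume w: "w \<in> - (\<Union>l\<in>L. span {l})"
      then have "w \<noteq> 0" using False by (auto simp: span_zero)
      then show "w \<in> (\<Union>e\<in>- {0}. T \<union> C e)" using w by (auto simp: C_def intro!: bexI[of _ w])
    qed
  qed
  ultimately show ?thesis by simp
qed (simp add: connected_UNIV)

lemma components_separated_Un:
  fixes A B :: "'a::topological_space set"
  assumes "connected A" "connected B" "A \<noteq> {}" "B \<noteq> {}"
    and "open U" "open V" "U \<inter> V = {}" "A \<subseteq> U" "B \<subseteq> V"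
  shows "components (A \<union> B) = {A, B}"
proof -
  have maximal: "A \<in> components (A \<union> B)"
    if "connected A" "A \<noteq> {}" "open U" "open V" "U \<inter> V = {}" "A \<subseteq> U" "B \<subseteq> V"
    for A B U V :: "'a set"
    unfolding in_components_maximal
  proof (intro conjI allI impI)
    fix D assume D: "D \<noteq> {} \<and> A \<subseteq> D \<and> D \<subseteq> A \<union> B \<and> connected D"
    then have "U \<inter> D = {} \<or> V \<inter> D = {}"
      using connectedD[of D U V] that by blast
    then show "D = A" using D that by blast
  qed (use that in auto)
  have A: "A \<in> components (A \<union> B)" using maximal[of A U V B] assms by blast
  have B: "B \<in> components (A \<union> B)" using maximal[of B V U A] assms by (auto simp: Un_commute)
  have "C = A \<or> C = B" if C: "C \<in> components (A \<union> B)" for C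
  proof -
    obtain x where "x \<in> C" using in_components_nonempty[OF C] by blast
    then have "C \<inter> A \<noteq> {} \<or> C \<inter> B \<noteq> {}" using in_components_subset[OF C] by blast
    then show ?thesis using components_eq[OF C A] components_eq[OF C B] by blast
  qed
  then show ?thesis using A B by blast
qed

section \<open>Supporting hyperplanes\<close>

lemma frontier_convex_supporting:
  fixes K :: "'a::euclidean_space set"
  assumes "closed K" "convex K" "x \<in> frontier K"
  obtains w where "w \<noteq> 0" "x \<in> K" "\<forall>z\<in>K. z \<bullet> w \<le> x \<bullet> w"
proof -
  have xK: "x \<in> K" using assms frontier_subset_closed by blast
  show ?thesis
  proof (cases "interior K = {}")
    case True
    then obtain a b where a: "a \<noteq> 0" "K \<subseteq> {x. a \<bullet> x = b}"
      using empty_interior_subset_hyperplane[OF assms(2)] by blast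
    have "z \<bullet> a \<le> x \<bullet> a" if "z \<in> K" for z
    proof -
      have "a \<bullet> z = b" "a \<bullet> x = b" using a(2) that xK by auto
      then show ?thesis by (simp add: inner_commute)
    qed
    then show ?thesis using a(1) xK that by blast
  next
    case False
    then have "rel_interior K = interior K" by (rule rel_interior_nonempty_interior)
    then have "x \<notin> rel_interior K" using assms(3) by (simp add: frontier_def)
    moreover have "x \<in> closure K" using xK closure_subset by blast
    ultimately obtain a where a: "a \<noteq> 0" "\<And>y. y \<in> closure K \<Longrightarrow> a \<bullet> x \<le> a \<bullet> y"
      using supporting_hyperplane_relative_frontier[OF assms(2)] by metis
    have "z \<bullet> - a \<le> x \<bullet> - a" if "z \<in> K" for z
    proof -
      have "a \<bullet> x \<le> a \<bullet> z" using a(2) that closure_subset by blast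
      then show ?thesis by (simp add: inner_commute)
    qed
    then show ?thesis using a(1) xK that[of "- a"] by auto
  qed
qed

lemma frontier_if_maximizer:
  fixes K :: "'a::real_inner set"
  assumes "w \<noteq> 0" "x \<in> K" "\<forall>z\<in>K. z \<bullet> w \<le> x \<bullet> w"
  shows "x \<in> frontier K"
proof -
  have "x \<notin> interior K"
  proof
    assume "x \<in> interior K"
    then obtain e where e: "e > 0" "ball x e \<subseteq> K" using mem_interior by blast
    define z where "z = x + (e / 2 / norm w) *\<^sub>R w"
    have "z \<in> K" using e assms(1) by (intro subsetD[OF e(2)]) (simp add: z_def dist_norm)
    then have "z \<bullet> w \<le> x \<bullet> w" using assms(3) by blast
    moreover have "z \<bullet> w = x \<bullet> w + (e / 2 / norm w) * (w \<bullet> w)"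
      by (simp add: z_def inner_add_left)
    moreover have "(e / 2 / norm w) * (w \<bullet> w) > 0" using e assms(1) by simp
    ultimately show False by linarith
  qed
  then show ?thesis using assms(2) closure_subset by (auto simp: frontier_def)
qed

unbundle cross3_syntax

section \<open>Maximizing linear functionals on discs\<close>

definition perp :: "'a::real_inner \<Rightarrow> 'a \<Rightarrow> 'a" where
  "perp a w = w - ((w \<bullet> a) / (a \<bullet> a)) *\<^sub>R a"

text \<open>The maximizer of \<open>x \<bullet> w\<close> on \<open>disc a\<close>; it is unique unless \<open>w\<close> is parallel to \<open>a\<close>, where the
  definition degenerates to \<open>0\<close>.\<close>

definition disc_max :: "real^3 \<Rightarrow> real^3 \<Rightarrow> real^3" where
  "disc_max a w = (norm a / norm (perp a w)) *\<^sub>R perp a w"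

lemma perp_orthogonal: "perp a w \<bullet> a = 0"
  by (cases "a = 0") (simp_all add: perp_def inner_diff_left)

lemma inner_perp: "d \<bullet> a = 0 \<Longrightarrow> d \<bullet> perp a w = d \<bullet> w"
  by (simp add: perp_def inner_diff_right)

lemma perp_decomp: "w = perp a w + ((w \<bullet> a) / (a \<bullet> a)) *\<^sub>R a"
  by (simp add: perp_def)

lemma perp_eq_0_iff:
  assumes "a \<noteq> 0"
  shows "perp a w = 0 \<longleftrightarrow> w \<in> span {a}"
proof
  assume "perp a w = 0"
  then have "w = ((w \<bullet> a) / (a \<bullet> a)) *\<^sub>R a" using perp_decomp[of w a] by simp
  then show "w \<in> span {a}" by (metis span_base span_scale singletonI)
next
  assume "w \<in> span {a}"
  then obtain c where "w = c *\<^sub>R a" by (auto simp: span_singleton)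
  then show "perp a w = 0" using assms by (simp add: perp_def)
qed

lemma inner_perp_self: "perp a w \<bullet> w = perp a w \<bullet> perp a w"
  by (subst (2) perp_decomp[of w a]) (simp add: inner_add_right perp_orthogonal)

lemma cross_eq_0_iff_in_span: "a \<noteq> 0 \<Longrightarrow> x \<times> a = 0 \<longleftrightarrow> x \<in> span {a}"
proof
  assume a: "a \<noteq> 0" and c: "x \<times> a = 0"
  have "(a \<bullet> a) *\<^sub>R x = (a \<bullet> x) *\<^sub>R a"
    using Lagrange[of a x a] c by simp
  moreover have "x = (1 / (a \<bullet> a)) *\<^sub>R ((a \<bullet> a) *\<^sub>R x)"
    using a by simp
  ultimately have "x = ((a \<bullet> x) / (a \<bullet> a)) *\<^sub>R a"
    by simp
  then show "x \<in> span {a}" by (metis span_base span_scale singletonI)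
next
  assume "x \<in> span {a}"
  then show "x \<times> a = 0" by (auto simp: span_singleton cross_mult_left)
qed

lemma disc_max_in_disc: "disc_max a w \<in> disc a"
  by (simp add: disc_max_def disc_def perp_orthogonal)

lemma inner_disc_max: "perp a w \<noteq> 0 \<Longrightarrow> disc_max a w \<bullet> w = norm a * norm (perp a w)"
  by (simp add: disc_max_def inner_perp_self power2_norm_eq_inner[symmetric] power2_eq_square)

lemma inner_le_disc_max:
  assumes "d \<in> disc a"
  shows "d \<bullet> w \<le> norm a * norm (perp a w)"
proof -
  have "d \<bullet> w = d \<bullet> perp a w" using assms by (simp add: disc_def inner_perp)
  also have "\<dots> \<le> norm d * norm (perp a w)" by (rule norm_cauchy_schwarz)
  also have "\<dots> \<le> norm a * norm (perp a w)" using assms by (simp add: disc_def mult_right_mono)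
  finally show ?thesis .
qed

lemma disc_max_unique:
  assumes p: "perp a w \<noteq> 0" and d: "d \<in> disc a"
    and ge: "norm a * norm (perp a w) \<le> d \<bullet> w"
  shows "d = disc_max a w"
proof -
  let ?P = "perp a w"
  have dP: "d \<bullet> w = d \<bullet> ?P" using d by (simp add: disc_def inner_perp)
  have cs: "d \<bullet> ?P \<le> norm d * norm ?P" by (rule norm_cauchy_schwarz)
  have "norm a * norm ?P \<le> norm d * norm ?P" using ge dP cs by linarith
  then have norm_d: "norm d = norm a" using d p by (simp add: disc_def)
  then have "d \<bullet> ?P = norm d * norm ?P" using ge dP cs unfolding norm_d by linarith
  then have "norm d *\<^sub>R ?P = norm ?P *\<^sub>R d" by (simp add: norm_cauchy_schwarz_eq)
  then have "d = (1 / norm ?P) *\<^sub>R (norm d *\<^sub>R ?P)" using p by simp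
  then show ?thesis using norm_d by (simp add: disc_max_def)
qed

lemma cross_perp: "a \<times> perp a x = a \<times> x"
  by (subst (2) perp_decomp[of x a]) (simp add: cross_add_right cross_mult_right)

lemma continuous_on_perp: "continuous_on S (perp a)"
proof -
  have "continuous_on S (\<lambda>w. w - (w \<bullet> a) *\<^sub>R ((1 / (a \<bullet> a)) *\<^sub>R a))"
    by (intro continuous_intros)
  then show ?thesis by (simp add: perp_def[abs_def])
qed

lemma disc_max_eq_imp_coplanar:
  assumes a: "a \<noteq> 0" and px: "perp a x \<noteq> 0" and py: "perp a y \<noteq> 0"
    and eq: "disc_max a x = disc_max a y"
  shows "(a \<times> x) \<bullet> y = 0"
proof -
  let ?l = "norm (perp a x) / norm (perp a y)"
  have "perp a x = (norm (perp a x) / norm a) *\<^sub>R disc_max a x"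
    using a px by (simp add: disc_max_def)
  also have "\<dots> = ?l *\<^sub>R perp a y" using a py eq by (simp add: disc_max_def)
  finally have "a \<times> x = ?l *\<^sub>R (a \<times> y)"
    using cross_perp[of a x] cross_perp[of a y] cross_mult_right[of a ?l "perp a y"] by simp
  then show ?thesis by (simp add: dot_cross_self)
qed

lemma disc_max_eq_if_same_side:
  assumes n: "n \<noteq> 0" and a: "a \<noteq> 0" and orth: "a \<bullet> n = 0" "x \<bullet> n = 0" "y \<bullet> n = 0"
    and same_side: "(n \<bullet> (a \<times> x)) * (n \<bullet> (a \<times> y)) > 0"
  shows "disc_max a x = disc_max a y"
proof -
  define t where "t = a \<times> n"
  have "(norm t)\<^sup>2 = (norm a)\<^sup>2 * (norm n)\<^sup>2"
    unfolding t_def using norm_cross[of a n] orth(1) by simp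
  then have t0: "t \<noteq> 0" using a n by auto
  have along_t: "\<exists>s. perp a z = s *\<^sub>R t" if "z \<bullet> n = 0" for z
  proof -
    have "perp a z \<bullet> n = 0" using that orth(1) by (simp add: perp_def inner_diff_left)
    then have "perp a z \<times> t = 0" unfolding t_def by (simp add: Lagrange perp_orthogonal)
    then show ?thesis using cross_eq_0_iff_in_span[OF t0] by (auto simp: span_singleton)
  qed
  obtain s r where s: "perp a x = s *\<^sub>R t" and r: "perp a y = r *\<^sub>R t"
    using along_t orth(2,3) by metis
  have "a \<times> x = s *\<^sub>R (a \<times> t)"
    using cross_perp[of a x] by (simp add: s cross_mult_right)
  then have "n \<bullet> (a \<times> x) = s * (n \<bullet> (a \<times> t))" by simp
  moreover have "a \<times> y = r *\<^sub>R (a \<times> t)"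
    using cross_perp[of a y] by (simp add: r cross_mult_right)
  then have "n \<bullet> (a \<times> y) = r * (n \<bullet> (a \<times> t))" by simp
  ultimately have "(s * r) * (n \<bullet> (a \<times> t))\<^sup>2 > 0"
    using same_side by (simp add: power2_eq_square algebra_simps)
  then have "s * r > 0" by (auto simp: zero_less_mult_iff)
  then consider "s > 0" "r > 0" | "s < 0" "r < 0" by (auto simp: zero_less_mult_iff)
  then show ?thesis using s r by cases (simp_all add: disc_max_def)
qed

lemma disc_sum_mem: "(\<forall>j\<in>J. y j \<in> disc (v j)) \<Longrightarrow> (\<Sum>j\<in>J. y j) \<in> disc_sum v J"
  by (auto simp: disc_sum_def)

lemma disc_sumE:
  assumes "x \<in> disc_sum v J"
  obtains y where "\<forall>j\<in>J. y j \<in> disc (v j)" "x = (\<Sum>j\<in>J. y j)"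
  using assms by (auto simp: disc_sum_def)

lemma disc_sum_insert:
  assumes "finite J" "k \<notin> J"
  shows "disc_sum v (insert k J) = (\<Union>a\<in>disc (v k). \<Union>b\<in>disc_sum v J. {a + b})"
proof (intro set_eqI iffI)
  fix x assume "x \<in> disc_sum v (insert k J)"
  then obtain y where y: "\<forall>j\<in>insert k J. y j \<in> disc (v j)" "x = (\<Sum>j\<in>insert k J. y j)"
    by (rule disc_sumE)
  then have "x = y k + (\<Sum>j\<in>J. y j)" "(\<Sum>j\<in>J. y j) \<in> disc_sum v J"
    using assms by (auto intro: disc_sum_mem)
  then show "x \<in> (\<Union>a\<in>disc (v k). \<Union>b\<in>disc_sum v J. {a + b})" using y by auto
next
  fix x assume "x \<in> (\<Union>a\<in>disc (v k). \<Union>b\<in>disc_sum v J. {a + b})"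
  then obtain a y where a: "a \<in> disc (v k)" and y: "\<forall>j\<in>J. y j \<in> disc (v j)"
    and x: "x = a + (\<Sum>j\<in>J. y j)" by (auto elim: disc_sumE)
  have "(\<Sum>j\<in>J. (y(k := a)) j) = (\<Sum>j\<in>J. y j)" using assms by (intro sum.cong) auto
  then have "x = (\<Sum>j\<in>insert k J. (y(k := a)) j)" using assms x by simp
  then show "x \<in> disc_sum v (insert k J)" using a y by (auto intro!: disc_sum_mem)
qed

lemma disc_eq_hyperplane_Int_cball: "disc a = {x. a \<bullet> x = 0} \<inter> cball 0 (norm a)"
  by (auto simp: disc_def inner_commute)

lemma disc_sum_empty: "disc_sum v {} = {0}"
  by (simp add: disc_sum_def)

lemma compact_disc_sum: "finite J \<Longrightarrow> compact (disc_sum v J)"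
proof (induction J rule: finite_induct)
  case (insert k J)
  then show ?case
    by (simp add: disc_sum_insert disc_eq_hyperplane_Int_cball compact_sums' closed_Int_compact
        closed_hyperplane)
qed (simp add: disc_sum_empty)

lemma convex_disc_sum: "finite J \<Longrightarrow> convex (disc_sum v J)"
proof (induction J rule: finite_induct)
  case (insert k J)
  then show ?case
    by (simp add: disc_sum_insert disc_eq_hyperplane_Int_cball convex_sums convex_Int convex_hyperplane)
qed (simp add: disc_sum_empty)

lemma sum_disc_max_in_disc_sum: "(\<Sum>j\<in>J. disc_max (v j) w) \<in> disc_sum v J"
  by (intro disc_sum_mem) (simp add: disc_max_in_disc)

lemma inner_le_sum_disc_max:
  assumes "\<forall>j\<in>J. perp (v j) w \<noteq> 0" and "z \<in> disc_sum v J"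
  shows "z \<bullet> w \<le> (\<Sum>j\<in>J. disc_max (v j) w) \<bullet> w"
proof -
  obtain y where y: "\<forall>j\<in>J. y j \<in> disc (v j)" "z = (\<Sum>j\<in>J. y j)"
    using assms(2) by (rule disc_sumE)
  have "z \<bullet> w = (\<Sum>j\<in>J. y j \<bullet> w)" using y by (simp add: inner_sum_left)
  also have "\<dots> \<le> (\<Sum>j\<in>J. disc_max (v j) w \<bullet> w)"
    using y assms(1) by (intro sum_mono) (simp add: inner_disc_max inner_le_disc_max)
  finally show ?thesis by (simp add: inner_sum_left)
qed

lemma sum_disc_max_unique:
  assumes fin: "finite J" and generic: "\<forall>j\<in>J. perp (v j) w \<noteq> 0"
    and y: "\<forall>j\<in>J. y j \<in> disc (v j)"
    and ge: "(\<Sum>j\<in>J. disc_max (v j) w) \<bullet> w \<le> (\<Sum>j\<in>J. y j) \<bullet> w"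
  shows "\<forall>j\<in>J. y j = disc_max (v j) w"
proof -
  define gap where "gap j = norm (v j) * norm (perp (v j) w) - y j \<bullet> w" for j
  have gap_nonneg: "\<forall>j\<in>J. 0 \<le> gap j"
    using y by (simp add: gap_def inner_le_disc_max)
  have "(\<Sum>j\<in>J. gap j) = (\<Sum>j\<in>J. disc_max (v j) w) \<bullet> w - (\<Sum>j\<in>J. y j) \<bullet> w"
    using generic by (simp add: gap_def inner_sum_left sum_subtractf inner_disc_max)
  moreover have "0 \<le> (\<Sum>j\<in>J. gap j)" using gap_nonneg by (simp add: sum_nonneg)
  ultimately have "(\<Sum>j\<in>J. gap j) = 0" using ge by linarith
  then have "\<forall>j\<in>J. gap j = 0" using sum_nonneg_eq_0_iff[OF fin] gap_nonneg by blast
  then show ?thesis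
    using y generic by (auto simp: gap_def intro!: disc_max_unique)
qed

lemma cross_signs_of_max_slope:
  fixes n w c d :: "real^3"
  assumes n: "n \<noteq> 0" and orth: "n \<bullet> w = 0" "n \<bullet> c = 0" "n \<bullet> d = 0" and cd: "c \<times> d \<noteq> 0"
    and pos: "c \<bullet> (n \<times> w) > 0" "d \<bullet> (n \<times> w) > 0"
    and slope: "(c \<bullet> w) * (d \<bullet> (n \<times> w)) \<le> (d \<bullet> w) * (c \<bullet> (n \<times> w))"
  shows "n \<bullet> (c \<times> w) < 0" "n \<bullet> (c \<times> d) < 0"
proof -
  have w0: "w \<bullet> w > 0" using pos(1) by auto
  have "w \<times> (n \<times> w) = (w \<bullet> w) *\<^sub>R n" using orth(1) by (simp add: Lagrange inner_commute)
  then have key: "(n \<bullet> (x \<times> y)) * (w \<bullet> w) = (x \<bullet> w) * (y \<bullet> (n \<times> w)) - (x \<bullet> (n \<times> w)) * (y \<bullet> w)"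
    for x y
    using dot_cross[of x y w "n \<times> w"] by (simp add: inner_commute mult.commute)
  have "(n \<bullet> (c \<times> w)) * (w \<bullet> w) = - (c \<bullet> (n \<times> w)) * (w \<bullet> w)"
    using key[of c w] by (simp add: dot_cross_self)
  then have "(n \<bullet> (c \<times> w) + c \<bullet> (n \<times> w)) * (w \<bullet> w) = 0" by (simp add: algebra_simps)
  then have "n \<bullet> (c \<times> w) + c \<bullet> (n \<times> w) = 0" using w0 by simp
  then show "n \<bullet> (c \<times> w) < 0" using pos(1) by linarith
  have "(n \<bullet> (c \<times> d)) * (w \<bullet> w) \<le> 0"
    using key[of c d] slope by (simp add: mult.commute)
  then have "n \<bullet> (c \<times> d) \<le> 0" using w0 by (simp add: mult_le_0_iff)
  moreover have "n \<bullet> (c \<times> d) \<noteq> 0"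
  proof
    assume z: "n \<bullet> (c \<times> d) = 0"
    have "n \<times> (c \<times> d) = 0" using orth(2,3) by (simp add: Lagrange)
    then obtain \<alpha> where "n = \<alpha> *\<^sub>R (c \<times> d)"
      using cross_eq_0_iff_in_span[OF cd] by (auto simp: span_singleton)
    then show False using z n cd by simp
  qed
  ultimately show "n \<bullet> (c \<times> d) < 0" by simp
qed

section \<open>The boundary of a discotope\<close>

locale nondegenerate_discs =
  fixes v :: "nat \<Rightarrow> real^3" and N :: nat
  assumes two_le_N: "N \<ge> 2"
    and nonzero: "\<And>i. i < N \<Longrightarrow> v i \<noteq> 0"
    and not_parallel: "\<And>i j. i < N \<Longrightarrow> j < N \<Longrightarrow> i \<noteq> j \<Longrightarrow>
           v i /\<^sub>R norm (v i) \<noteq> v j /\<^sub>R norm (v j) \<and>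
           v i /\<^sub>R norm (v i) \<noteq> - (v j /\<^sub>R norm (v j))"
begin

abbreviation K :: "(real^3) set" where "K \<equiv> discotope v N"

definition dir :: "nat \<Rightarrow> bool \<Rightarrow> real^3" where
  "dir i s = (if s then v i else - v i)"

text \<open>\<open>q i True\<close> and \<open>q i False\<close> are the points \<open>q\<^sub>i\<^sup>+\<close> and \<open>q\<^sub>i\<^sup>-\<close> (lemma \<open>q_pt_eq\<close>).\<close>

definition q :: "nat \<Rightarrow> bool \<Rightarrow> real^3" where
  "q i s = (\<Sum>j\<in>{..<N} - {i}. disc_max (v j) (dir i s))"

definition generic :: "(real^3) set" where
  "generic = - (\<Union>j<N. span {v j})"

definition support_point :: "real^3 \<Rightarrow> real^3" where
  "support_point w = (\<Sum>j<N. disc_max (v j) w)"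

definition in_common_plane :: bool where
  "in_common_plane \<longleftrightarrow> (\<exists>n::real^3. n \<noteq> 0 \<and> (\<forall>i<N. n \<bullet> v i = 0))"

lemma cross_neq_0: "i < N \<Longrightarrow> j < N \<Longrightarrow> i \<noteq> j \<Longrightarrow> v i \<times> v j \<noteq> 0"
proof
  assume ij: "i < N" "j < N" "i \<noteq> j" and "v i \<times> v j = 0"
  then obtain c where c: "v i = c *\<^sub>R v j"
    using cross_eq_0_iff_in_span[OF nonzero[OF ij(2)]] by (auto simp: span_singleton)
  then have "c \<noteq> 0" using nonzero[OF ij(1)] by auto
  then have "v i /\<^sub>R norm (v i) = v j /\<^sub>R norm (v j) \<or>
      v i /\<^sub>R norm (v i) = - (v j /\<^sub>R norm (v j))"
    using c nonzero[OF ij(2)] by (cases "c > 0") auto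
  then show False using not_parallel[OF ij] by blast
qed

lemma generic_iff: "w \<in> generic \<longleftrightarrow> (\<forall>j<N. perp (v j) w \<noteq> 0)"
  by (auto simp: generic_def perp_eq_0_iff nonzero)

lemma perp_dir_neq_0: "i < N \<Longrightarrow> j < N \<Longrightarrow> j \<noteq> i \<Longrightarrow> perp (v j) (dir i s) \<noteq> 0"
  using cross_neq_0 cross_eq_0_iff_in_span perp_eq_0_iff nonzero
  by (metis dir_def cross_minus_left neg_equal_0_iff_equal)

lemma q_in_disc_sum: "q i s \<in> disc_sum v ({..<N} - {i})"
  unfolding q_def by (rule sum_disc_max_in_disc_sum)

lemma inner_le_q:
  "i < N \<Longrightarrow> z \<in> disc_sum v ({..<N} - {i}) \<Longrightarrow> z \<bullet> dir i s \<le> q i s \<bullet> dir i s"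
  unfolding q_def by (rule inner_le_sum_disc_max) (auto simp: perp_dir_neq_0)

lemma q_components_unique:
  assumes "i < N" "\<forall>j\<in>{..<N} - {i}. y j \<in> disc (v j)"
    and "q i s \<bullet> dir i s \<le> (\<Sum>j\<in>{..<N} - {i}. y j) \<bullet> dir i s"
  shows "\<forall>j\<in>{..<N} - {i}. y j = disc_max (v j) (dir i s)"
  using assms by (intro sum_disc_max_unique) (auto simp: q_def perp_dir_neq_0)

lemma q_unique:
  assumes "i < N" "\<forall>j\<in>{..<N} - {i}. y j \<in> disc (v j)"
    and "q i s \<bullet> dir i s \<le> (\<Sum>j\<in>{..<N} - {i}. y j) \<bullet> dir i s"
  shows "(\<Sum>j\<in>{..<N} - {i}. y j) = q i s"
  using q_components_unique[OF assms] unfolding q_def by simp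

lemma q_pt_eq: "i < N \<Longrightarrow> q_pt v N i s = q i s"
proof -
  assume i: "i < N"
  have maximal_iff: "(if s then x \<bullet> v i \<le> p \<bullet> v i else p \<bullet> v i \<le> x \<bullet> v i)
      \<longleftrightarrow> x \<bullet> dir i s \<le> p \<bullet> dir i s" for x p
    by (cases s) (auto simp: dir_def)
  show ?thesis unfolding q_pt_def maximal_iff
  proof (rule the_equality)
    fix p assume p: "p \<in> disc_sum v ({..<N} - {i}) \<and>
      (\<forall>x\<in>disc_sum v ({..<N} - {i}). x \<bullet> dir i s \<le> p \<bullet> dir i s)"
    then obtain y where "\<forall>j\<in>{..<N} - {i}. y j \<in> disc (v j)" "p = (\<Sum>j\<in>{..<N} - {i}. y j)"
      by (auto elim: disc_sumE)
    then show "p = q i s" using p q_in_disc_sum i by (auto intro!: q_unique)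
  qed (use i q_in_disc_sum inner_le_q in blast)
qed

lemma bdisc_eq: "i < N \<Longrightarrow> bdisc v N i s = (\<lambda>x. x + q i s) ` disc (v i)"
  by (simp add: bdisc_def q_pt_eq)

lemma bdisc_point_decomp:
  fixes s :: bool
  assumes "i < N" "d \<in> disc (v i)"
  defines "y \<equiv> \<lambda>j. if j = i then d else disc_max (v j) (dir i s)"
  shows "\<forall>j<N. y j \<in> disc (v j)" "(\<Sum>j<N. y j) = d + q i s"
proof -
  show "\<forall>j<N. y j \<in> disc (v j)" using assms by (simp add: y_def disc_max_in_disc)
  have "(\<Sum>j\<in>{..<N} - {i}. y j) = q i s" unfolding q_def y_def by (rule sum.cong) auto
  then show "(\<Sum>j<N. y j) = d + q i s" using assms(1) by (simp add: sum.remove y_def)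
qed

lemma compact_K: "compact K" and convex_K: "convex K"
  by (simp_all add: discotope_def compact_disc_sum convex_disc_sum)

lemma support_point_in_K: "support_point w \<in> K"
  unfolding support_point_def discotope_def by (rule sum_disc_max_in_disc_sum)

lemma inner_le_support_point: "w \<in> generic \<Longrightarrow> z \<in> K \<Longrightarrow> z \<bullet> w \<le> support_point w \<bullet> w"
  unfolding support_point_def discotope_def by (rule inner_le_sum_disc_max) (auto simp: generic_iff)

lemma support_point_unique:
  assumes "w \<in> generic" "\<forall>j<N. y j \<in> disc (v j)" "support_point w \<bullet> w \<le> (\<Sum>j<N. y j) \<bullet> w"
  shows "\<forall>j<N. y j = disc_max (v j) w"
  using sum_disc_max_unique[of "{..<N}" v w y] assms by (auto simp: generic_iff support_point_def)

lemma generic_neq_0: "w \<in> generic \<Longrightarrow> w \<noteq> 0"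
  using two_le_N span_zero[of "{v 0}"] by (auto simp: generic_def)

lemma support_point_in_frontier: "w \<in> generic \<Longrightarrow> support_point w \<in> frontier K"
  by (auto intro!: frontier_if_maximizer generic_neq_0 support_point_in_K inner_le_support_point)

lemma maximizer_dir_in_bdisc:
  assumes i: "i < N" and x: "x \<in> K" and max: "\<forall>z\<in>K. z \<bullet> dir i s \<le> x \<bullet> dir i s"
  shows "x \<in> bdisc v N i s"
proof -
  obtain y where y: "\<forall>j<N. y j \<in> disc (v j)" and x_eq: "x = (\<Sum>j<N. y j)"
    using x unfolding discotope_def by (auto elim: disc_sumE)
  have split: "x = y i + (\<Sum>j\<in>{..<N} - {i}. y j)" using i x_eq by (simp add: sum.remove)
  define y' where "y' = (\<lambda>j. if j = i then y i else disc_max (v j) (dir i s))"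
  have "(\<Sum>j<N. y' j) \<in> K"
    using bdisc_point_decomp(1)[OF i] y i unfolding discotope_def y'_def by (auto intro: disc_sum_mem)
  then have "(y i + q i s) \<bullet> dir i s \<le> x \<bullet> dir i s"
    using max bdisc_point_decomp(2)[OF i, of "y i" s] y i unfolding y'_def by auto
  then have "q i s \<bullet> dir i s \<le> (\<Sum>j\<in>{..<N} - {i}. y j) \<bullet> dir i s"
    using split by (simp add: inner_add_left)
  then have "x = y i + q i s" using q_unique[OF i] y split by auto
  then show ?thesis using bdisc_eq[OF i] y i by auto
qed

lemma frontier_K_cases:
  assumes "x \<in> frontier K"
  shows "x \<in> support_point ` generic \<or> (\<exists>i<N. \<exists>s. x \<in> bdisc v N i s)"
proof -
  obtain w where w: "w \<noteq> 0" "x \<in> K" "\<forall>z\<in>K. z \<bullet> w \<le> x \<bullet> w"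
    using frontier_convex_supporting[OF compact_imp_closed[OF compact_K] convex_K assms] by blast
  show ?thesis
  proof (cases "w \<in> generic")
    case True
    obtain y where y: "\<forall>j<N. y j \<in> disc (v j)" "x = (\<Sum>j<N. y j)"
      using w(2) unfolding discotope_def by (auto elim: disc_sumE)
    then have "\<forall>j<N. y j = disc_max (v j) w"
      using support_point_unique[OF True] w(3) support_point_in_K by auto
    then have "x = support_point w" using y(2) unfolding support_point_def by simp
    then show ?thesis using True by blast
  next
    case False
    then obtain i c where i: "i < N" and wc: "w = c *\<^sub>R v i"
      by (auto simp: generic_def span_singleton)
    then have "c \<noteq> 0" using w(1) by auto
    then have "w = \<bar>c\<bar> *\<^sub>R dir i (c > 0)" using wc by (auto simp: dir_def)
    then have "\<forall>z\<in>K. z \<bullet> dir i (c > 0) \<le> x \<bullet> dir i (c > 0)"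
      using w(3) \<open>c \<noteq> 0\<close> by (metis inner_scaleR_right mult_le_cancel_left_pos zero_less_abs_iff)
    then show ?thesis using maximizer_dir_in_bdisc[OF i w(2)] i by blast
  qed
qed

text \<open>If the support point of a generic direction w lies on the boundary disc of v i, the
  remaining discs have the same maximizers in direction w as in direction v i, so every
  v j lies in the plane spanned by w and v i.\<close>

lemma support_point_in_bdisc_normal:
  assumes w: "w \<in> generic" and i: "i < N" and x: "support_point w \<in> bdisc v N i s"
  shows "w \<times> v i \<noteq> 0" "\<forall>j<N. (w \<times> v i) \<bullet> v j = 0"
proof -
  show "w \<times> v i \<noteq> 0"
    using w i by (auto simp: generic_def cross_eq_0_iff_in_span nonzero)
  obtain d where d: "d \<in> disc (v i)" "support_point w = d + q i s" using x bdisc_eq[OF i] by auto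
  define y where "y = (\<lambda>j. if j = i then d else disc_max (v j) (dir i s))"
  have "\<forall>j<N. y j = disc_max (v j) w"
  proof (rule support_point_unique[OF w])
    show "\<forall>j<N. y j \<in> disc (v j)" unfolding y_def by (rule bdisc_point_decomp(1)[OF i d(1)])
    show "support_point w \<bullet> w \<le> (\<Sum>j<N. y j) \<bullet> w"
      unfolding y_def bdisc_point_decomp(2)[OF i d(1)] d(2) by simp
  qed
  show "\<forall>j<N. (w \<times> v i) \<bullet> v j = 0"
  proof (intro allI impI)
    fix j assume j: "j < N"
    show "(w \<times> v i) \<bullet> v j = 0"
    proof (cases "j = i")
      case False
      have "disc_max (v j) w = disc_max (v j) (dir i s)"
        using \<open>\<forall>j<N. y j = disc_max (v j) w\<close> j False by (auto simp: y_def)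
      then have "(v j \<times> w) \<bullet> dir i s = 0"
        using disc_max_eq_imp_coplanar[OF nonzero[OF j]] w j perp_dir_neq_0[OF i j False]
        by (auto simp: generic_iff)
      then have "(v j \<times> w) \<bullet> v i = 0" by (cases s) (auto simp: dir_def)
      then show ?thesis by (metis cross_triple)
    qed (simp add: dot_cross_self)
  qed
qed

lemma S_set_eq: "S_set v N = support_point ` generic - (\<Union>i<N. bdisc v N i True \<union> bdisc v N i False)"
  (is "_ = _ - ?B")
proof -
  have "x \<in> support_point ` generic" if "x \<in> frontier K" "x \<notin> ?B" for x
  proof -
    have "x \<notin> bdisc v N i s" if "i < N" for i s
      using \<open>x \<notin> ?B\<close> that by (cases s) auto
    then show ?thesis using frontier_K_cases[OF \<open>x \<in> frontier K\<close>] by blast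
  qed
  moreover have "support_point ` generic \<subseteq> frontier K"
    using support_point_in_frontier by blast
  ultimately show ?thesis unfolding S_set_def by blast
qed

lemma S_set_eq_if_not_in_common_plane:
  assumes "\<not> in_common_plane"
  shows "S_set v N = support_point ` generic"
proof -
  have "support_point w \<notin> bdisc v N i s" if "w \<in> generic" "i < N" for w i s
    using support_point_in_bdisc_normal[OF that] assms unfolding in_common_plane_def by blast
  then have "support_point ` generic \<inter> (\<Union>i<N. bdisc v N i True \<union> bdisc v N i False) = {}"
    by blast
  then show ?thesis unfolding S_set_eq by blast
qed

lemma continuous_on_support_point: "continuous_on generic support_point"
  unfolding support_point_def disc_max_def
  by (intro continuous_intros continuous_on_perp) (auto simp: generic_iff)

lemma connected_support_point_generic: "connected (support_point ` generic)"
proof -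
  have "connected (- (\<Union>l\<in>v ` {..<N}. span {l}))"
    by (rule connected_complement_finite_lines) auto
  then have "connected generic" by (simp add: generic_def)
  then show ?thesis by (rule connected_continuous_image[OF continuous_on_support_point])
qed

lemma generic_nonempty: "generic \<noteq> {}"
proof -
  obtain w where "w \<notin> (\<Union>l\<in>v ` {..<N}. span {l})"
    using open_not_subset_finite_lines[of "v ` {..<N}" UNIV] by auto
  then show ?thesis by (auto simp: generic_def)
qed

lemma inner_q_dir_pos: "i < N \<Longrightarrow> q i s \<bullet> dir i s > 0"
proof -
  assume i: "i < N"
  have "(if i = 0 then 1 else 0) \<in> {..<N} - {i}" using two_le_N by auto
  then have "{..<N} - {i} \<noteq> {}" by blast
  moreover have "disc_max (v j) (dir i s) \<bullet> dir i s > 0" if "j \<in> {..<N} - {i}" for j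
    using that i perp_dir_neq_0 nonzero by (simp add: inner_disc_max)
  ultimately show ?thesis unfolding q_def inner_sum_left by (intro sum_pos) auto
qed

lemma bdisc_opposite_disjoint: "i < N \<Longrightarrow> bdisc v N i True \<inter> bdisc v N i False = {}"
proof -
  assume i: "i < N"
  have inner_v: "x \<bullet> v i = q i s \<bullet> v i" if "x \<in> bdisc v N i s" for x s
    using that by (auto simp: bdisc_eq[OF i] inner_add_left disc_def)
  have "q i True \<bullet> v i > 0" "q i False \<bullet> v i < 0"
    using inner_q_dir_pos[OF i, of True] inner_q_dir_pos[OF i, of False] by (simp_all add: dir_def)
  then show ?thesis using inner_v[of _ True] inner_v[of _ False] by force
qed

text \<open>A common point of the boundary discs of v i and v j decomposes as the maximizer in
  direction dir i s as well as in direction dir j t; the maximizers on every third disc then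
  agree, which puts every v k into the plane spanned by v i and v j.\<close>

lemma bdisc_meet_imp_in_common_plane:
  assumes i: "i < N" and j: "j < N" and ij: "i \<noteq> j"
    and meet: "bdisc v N i s \<inter> bdisc v N j t \<noteq> {}"
  shows in_common_plane
proof -
  obtain x where "x \<in> (\<lambda>x. x + q i s) ` disc (v i)" "x \<in> (\<lambda>x. x + q j t) ` disc (v j)"
    using meet unfolding bdisc_eq[OF i] bdisc_eq[OF j] by blast
  then obtain d d' where d: "d \<in> disc (v i)" "d' \<in> disc (v j)" "d + q i s = d' + q j t"
    by blast
  define y where "y = (\<lambda>k. if k = j then d' else disc_max (v k) (dir j t))"
  have y_disc: "\<forall>k<N. y k \<in> disc (v k)" and y_sum: "(\<Sum>k<N. y k) = d + q i s"
    using bdisc_point_decomp[OF j d(2), of t] d(3) by (simp_all add: y_def)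
  have "y i + (\<Sum>k\<in>{..<N} - {i}. y k) = d + q i s"
    using sum.remove[of "{..<N}" i y] i y_sum by simp
  moreover have "y i \<bullet> dir i s = 0" "d \<bullet> dir i s = 0"
    using y_disc i d(1) by (auto simp: disc_def dir_def)
  ultimately have "(\<Sum>k\<in>{..<N} - {i}. y k) \<bullet> dir i s = q i s \<bullet> dir i s"
    by (metis add_0 inner_add_left)
  then have same_max: "\<forall>k\<in>{..<N} - {i}. y k = disc_max (v k) (dir i s)"
    using y_disc by (intro q_components_unique[OF i]) simp_all
  have "(v i \<times> v j) \<bullet> v k = 0" if k: "k < N" for k
  proof (cases "k = i \<or> k = j")
    case False
    then have "disc_max (v k) (dir j t) = disc_max (v k) (dir i s)"
      using same_max[rule_format, of k] k False by (simp add: y_def)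
    then have "(v k \<times> dir j t) \<bullet> dir i s = 0"
      using False by (intro disc_max_eq_imp_coplanar nonzero k perp_dir_neq_0 i j) auto
    then have "(v k \<times> v j) \<bullet> v i = 0"
      by (cases s; cases t) (simp_all add: dir_def cross_minus_right)
    then show ?thesis by (metis cross_triple cross_skew inner_minus_left neg_equal_0_iff_equal)
  qed (auto simp: dot_cross_self)
  then show ?thesis unfolding in_common_plane_def using cross_neq_0[OF i j ij] by blast
qed

lemma bdisc_disjoint:
  assumes "\<not> in_common_plane" "i < N" "j < N" "(i, s) \<noteq> (j, t)"
  shows "bdisc v N i s \<inter> bdisc v N j t = {}"
proof (cases "i = j")
  case True
  then have "s \<noteq> t" using assms(4) by simp
  then show ?thesis
    using bdisc_opposite_disjoint[OF assms(2)] True by (cases s; cases t) auto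
next
  case False
  then show ?thesis using bdisc_meet_imp_in_common_plane assms by blast
qed

lemma generic_if_inner_normal_neq_0:
  assumes "\<forall>k<N. n \<bullet> v k = 0" "n \<bullet> w \<noteq> 0"
  shows "w \<in> generic"
  using assms by (auto simp: generic_def span_singleton)

lemma inner_normal_support_point:
  assumes normal: "\<forall>k<N. n \<bullet> v k = 0" and nw: "n \<bullet> w \<noteq> 0"
  obtains c where "c > 0" "n \<bullet> support_point w = c * (n \<bullet> w)"
proof -
  have w: "w \<in> generic" by (rule generic_if_inner_normal_neq_0[OF normal nw])
  have "n \<bullet> disc_max (v j) w = (norm (v j) / norm (perp (v j) w)) * (n \<bullet> w)" if "j < N" for j
    using normal that by (simp add: disc_max_def perp_def inner_diff_right)
  then have "n \<bullet> support_point w = (\<Sum>j<N. norm (v j) / norm (perp (v j) w)) * (n \<bullet> w)"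
    by (simp add: support_point_def inner_sum_right sum_distrib_right)
  moreover have "(\<Sum>j<N. norm (v j) / norm (perp (v j) w)) > 0"
    using two_le_N w nonzero by (intro sum_pos) (auto simp: generic_iff lessThan_empty_iff)
  ultimately show ?thesis using that by blast
qed

lemma support_point_off_equator_not_in_bdisc:
  assumes n: "n \<noteq> 0" "\<forall>k<N. n \<bullet> v k = 0" and nw: "n \<bullet> w \<noteq> 0" and i: "i < N"
  shows "support_point w \<notin> bdisc v N i s"
proof
  assume "support_point w \<in> bdisc v N i s"
  then have m: "w \<times> v i \<noteq> 0" "\<forall>j<N. (w \<times> v i) \<bullet> v j = 0"
    using support_point_in_bdisc_normal generic_if_inner_normal_neq_0[OF n(2) nw] i by blast+
  define j where "j = (if i = 0 then 1 else (0::nat))"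
  have j: "j < N" "j \<noteq> i" using two_le_N by (auto simp: j_def)
  have t: "v i \<times> v j \<noteq> 0" using cross_neq_0[OF i j(1)] j(2) by simp
  have "n \<times> (v i \<times> v j) = 0" "(w \<times> v i) \<times> (v i \<times> v j) = 0"
    using n(2) m(2) i j by (simp_all add: Lagrange)
  then obtain \<alpha> \<beta> where "n = \<alpha> *\<^sub>R (v i \<times> v j)" "w \<times> v i = \<beta> *\<^sub>R (v i \<times> v j)"
    using cross_eq_0_iff_in_span[OF t] by (auto simp: span_singleton)
  moreover have "(w \<times> v i) \<bullet> w = 0" by (simp add: dot_cross_self)
  ultimately show False using nw m(1) by (auto simp: inner_commute)
qed

text \<open>Among the directions dir j t with positive component along n \<times> w, let dir i s have the
  largest slope (dir \<bullet> w) / (dir \<bullet> (n \<times> w)), here in cross-multiplied form. Then w and dir i s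
  lie on the same side of the plane spanned by n and v j, so they have the same maximizer on
  the disc of v j.\<close>

lemma disc_max_eq_at_max_slope:
  assumes n: "n \<noteq> 0" "\<forall>k<N. n \<bullet> v k = 0" and w: "w \<in> generic" "n \<bullet> w = 0"
    and i: "i < N" and j: "j < N" "j \<noteq> i"
    and pos: "dir i s \<bullet> (n \<times> w) > 0" "dir j t \<bullet> (n \<times> w) > 0"
    and slope: "(dir j t \<bullet> w) * (dir i s \<bullet> (n \<times> w)) \<le> (dir i s \<bullet> w) * (dir j t \<bullet> (n \<times> w))"
  shows "disc_max (v j) w = disc_max (v j) (dir i s)"
proof (rule disc_max_eq_if_same_side[OF n(1) nonzero[OF j(1)]])
  have ortho: "n \<bullet> dir k u = 0" if "k < N" for k u using n(2) that by (simp add: dir_def)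
  have "dir j t \<times> dir i s \<noteq> 0" using cross_neq_0[OF j(1) i j(2)] by (simp add: dir_def)
  then have "n \<bullet> (dir j t \<times> w) < 0" "n \<bullet> (dir j t \<times> dir i s) < 0"
    using cross_signs_of_max_slope[OF n(1) w(2) ortho[OF j(1)] ortho[OF i]] pos slope by blast+
  moreover have "(n \<bullet> (v j \<times> w)) * (n \<bullet> (v j \<times> dir i s))
      = (n \<bullet> (dir j t \<times> w)) * (n \<bullet> (dir j t \<times> dir i s))"
    by (cases t) (simp_all add: dir_def)
  ultimately show "(n \<bullet> (v j \<times> w)) * (n \<bullet> (v j \<times> dir i s)) > 0"
    by (simp add: mult_neg_neg)
  show "v j \<bullet> n = 0" "w \<bullet> n = 0" "dir i s \<bullet> n = 0"
    using n(2) j(1) w(2) ortho[OF i, of s] by (simp_all add: inner_commute)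
qed

lemma support_point_on_equator_in_bdisc:
  assumes n: "n \<noteq> 0" "\<forall>k<N. n \<bullet> v k = 0" and w: "w \<in> generic" "n \<bullet> w = 0"
  obtains i s where "i < N" "support_point w \<in> bdisc v N i s"
proof -
  define f where "f = n \<times> w"
  have f_nz: "v k \<bullet> f \<noteq> 0" if k: "k < N" for k
  proof
    assume "v k \<bullet> f = 0"
    then have "v k \<times> (f \<times> n) = 0" using n(2) k by (simp add: Lagrange inner_commute)
    moreover have "f \<times> n = (n \<bullet> n) *\<^sub>R w"
      using w(2) Lagrange[of n n w] cross_skew[of f n] by (simp add: f_def inner_commute)
    ultimately have "(n \<bullet> n) *\<^sub>R (v k \<times> w) = 0" by (simp add: cross_mult_right)
    then have "w \<times> v k = 0" using n(1) cross_skew[of w "v k"] by simp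
    then show False using w(1) k by (auto simp: generic_def cross_eq_0_iff_in_span nonzero)
  qed
  define c where "c k = dir k (v k \<bullet> f > 0)" for k
  have pos: "c k \<bullet> f > 0" if "k < N" for k
    using f_nz[OF that] by (auto simp: c_def dir_def)
  define slope where "slope k = (c k \<bullet> w) / (c k \<bullet> f)" for k
  have fin: "finite (slope ` {..<N})" "slope ` {..<N} \<noteq> {}"
    using two_le_N by (auto simp: lessThan_empty_iff)
  then obtain i where i: "i < N" "slope i = Max (slope ` {..<N})"
    by (metis Max_in imageE lessThan_iff)
  have max: "slope k \<le> slope i" if "k < N" for k
    using that fin by (auto simp: i(2))
  have "disc_max (v j) w = disc_max (v j) (c i)" if j: "j < N" "j \<noteq> i" for j
  proof -
    have "(c j \<bullet> w) * (c i \<bullet> f) \<le> (c i \<bullet> w) * (c j \<bullet> f)"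
      using max[OF j(1)] pos[OF j(1)] pos[OF i(1)] by (simp add: slope_def field_simps)
    then show ?thesis using pos[OF j(1)] pos[OF i(1)] unfolding c_def f_def
      by (intro disc_max_eq_at_max_slope[OF n w i(1) j])
  qed
  then have "support_point w = disc_max (v i) w + q i (v i \<bullet> f > 0)"
    using i(1) by (simp add: support_point_def q_def sum.remove c_def)
  then have "support_point w \<in> bdisc v N i (v i \<bullet> f > 0)"
    using i(1) by (simp add: bdisc_eq disc_max_in_disc)
  then show ?thesis using that i(1) by blast
qed

lemma S_set_eq_if_normal:
  assumes n: "n \<noteq> 0" "\<forall>k<N. n \<bullet> v k = 0"
  shows "S_set v N = support_point ` {w. n \<bullet> w > 0} \<union> support_point ` {w. n \<bullet> w < 0}"
proof -
  let ?B = "\<Union>i<N. bdisc v N i True \<union> bdisc v N i False"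
  have in_B: "x \<in> ?B" if "i < N" "x \<in> bdisc v N i s" for x i s
    using that by (cases s) auto
  have "support_point ` generic - ?B = support_point ` {w. n \<bullet> w \<noteq> 0}"
  proof (intro equalityI subsetI)
    fix x assume "x \<in> support_point ` generic - ?B"
    then obtain w where w: "w \<in> generic" "x = support_point w" "x \<notin> ?B" by blast
    have "n \<bullet> w \<noteq> 0"
    proof
      assume "n \<bullet> w = 0"
      then obtain i s where "i < N" "x \<in> bdisc v N i s"
        using support_point_on_equator_in_bdisc[OF n w(1)] w(2) by blast
      then show False using w(3) in_B by blast
    qed
    then show "x \<in> support_point ` {w. n \<bullet> w \<noteq> 0}" using w(2) by blast
  next
    fix x assume "x \<in> support_point ` {w. n \<bullet> w \<noteq> 0}"
    then obtain w where w: "n \<bullet> w \<noteq> 0" "x = support_point w" by blast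
    then have "x \<notin> bdisc v N i s" if "i < N" for i s
      using support_point_off_equator_not_in_bdisc[OF n w(1) that] by simp
    then show "x \<in> support_point ` generic - ?B"
      using w generic_if_inner_normal_neq_0[OF n(2)] by blast
  qed
  moreover have "{w. n \<bullet> w \<noteq> 0} = {w. n \<bullet> w > 0} \<union> {w. n \<bullet> w < 0}" by auto
  ultimately show ?thesis unfolding S_set_eq by (simp add: image_Un)
qed

lemma connected_support_point_halfspace:
  assumes "\<forall>k<N. n \<bullet> v k = 0"
  shows "connected (support_point ` {w. n \<bullet> w > 0})"
proof -
  have "{w. n \<bullet> w > 0} \<subseteq> generic" using generic_if_inner_normal_neq_0[OF assms] by force
  then show ?thesis
    by (intro connected_continuous_image continuous_on_subset[OF continuous_on_support_point]
        convex_connected convex_halfspace_gt)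
qed

lemma support_point_halfspace_subset:
  assumes "\<forall>k<N. n \<bullet> v k = 0"
  shows "support_point ` {w. n \<bullet> w > 0} \<subseteq> {x. n \<bullet> x > 0}"
proof
  fix x assume "x \<in> support_point ` {w. n \<bullet> w > 0}"
  then obtain w where w: "n \<bullet> w > 0" "x = support_point w" by blast
  then obtain c where "c > 0" "n \<bullet> support_point w = c * (n \<bullet> w)"
    using inner_normal_support_point[OF assms] by (metis less_irrefl)
  then show "x \<in> {x. n \<bullet> x > 0}" using w by simp
qed

lemma card_components_S_set_if_in_common_plane:
  assumes in_common_plane
  shows "card (components (S_set v N)) = 2"
proof -
  obtain n where n: "n \<noteq> 0" "\<forall>k<N. n \<bullet> v k = 0"
    using assms unfolding in_common_plane_def by blast
  then have n': "- n \<noteq> 0" "\<forall>k<N. - n \<bullet> v k = 0" by simp_all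
  have halfspace_neg: "{w. - n \<bullet> w > 0} = {w. n \<bullet> w < 0}" "{x. - n \<bullet> x > 0} = {x. n \<bullet> x < 0}"
    by auto
  let ?A = "support_point ` {w. n \<bullet> w > 0}" and ?B = "support_point ` {w. n \<bullet> w < 0}"
  have conn: "connected ?A" "connected ?B"
    using connected_support_point_halfspace[OF n(2)] connected_support_point_halfspace[OF n'(2)]
    by (simp_all only: halfspace_neg)
  have "n \<in> {w. n \<bullet> w > 0}" "- n \<in> {w. n \<bullet> w < 0}" using n(1) by auto
  then have ne: "?A \<noteq> {}" "?B \<noteq> {}" by blast+
  have sides: "?A \<subseteq> {x. n \<bullet> x > 0}" "?B \<subseteq> {x. n \<bullet> x < 0}"
    using support_point_halfspace_subset[OF n(2)] support_point_halfspace_subset[OF n'(2)]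
    by (simp_all only: halfspace_neg)
  then have "components (?A \<union> ?B) = {?A, ?B}"
    using conn ne
    by (intro components_separated_Un[where U = "{x. n \<bullet> x > 0}" and V = "{x. n \<bullet> x < 0}"])
      (auto simp: open_halfspace_gt open_halfspace_lt)
  moreover have "?A \<noteq> ?B" using ne sides by fastforce
  ultimately show ?thesis using S_set_eq_if_normal[OF n] by simp
qed

lemma components_S_set_if_not_in_common_plane:
  "\<not> in_common_plane \<Longrightarrow> components (S_set v N) = {S_set v N}"
  using S_set_eq_if_not_in_common_plane connected_support_point_generic generic_nonempty
  by (simp add: components_eq_sing_iff)

end

theorem mainTheorem18:
  fixes v :: "nat \<Rightarrow> real^3" and N :: nat
  assumes "N \<ge> 2"
    and "\<And>i. i < N \<Longrightarrow> v i \<noteq> 0"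
    and "\<And>i j. i < N \<Longrightarrow> j < N \<Longrightarrow> i \<noteq> j \<Longrightarrow>
           v i /\<^sub>R norm (v i) \<noteq> v j /\<^sub>R norm (v j) \<and>
           v i /\<^sub>R norm (v i) \<noteq> - (v j /\<^sub>R norm (v j))"
  shows "(card (components (S_set v N)) = 2 \<longleftrightarrow>
            (\<exists>n::real^3. n \<noteq> 0 \<and> (\<forall>i<N. n \<bullet> v i = 0)))
       \<and> (\<not> (\<exists>n::real^3. n \<noteq> 0 \<and> (\<forall>i<N. n \<bullet> v i = 0)) \<longrightarrow>
            connected (S_set v N) \<and>
            (\<forall>i<N. \<forall>j<N. \<forall>s t. (i, s) \<noteq> (j, t) \<longrightarrow>
                bdisc v N i s \<inter> bdisc v N j t = {}))"
proof -
  interpret nondegenerate_discs v N using assms by unfold_locales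
  have iff: "card (components (S_set v N)) = 2 \<longleftrightarrow> in_common_plane"
    using card_components_S_set_if_in_common_plane components_S_set_if_not_in_common_plane
    by (cases in_common_plane) simp_all
  show ?thesis
  proof (intro conjI impI)
    show "card (components (S_set v N)) = 2 \<longleftrightarrow> (\<exists>n::real^3. n \<noteq> 0 \<and> (\<forall>i<N. n \<bullet> v i = 0))"
      using iff by (simp only: in_common_plane_def)
    assume "\<not> (\<exists>n::real^3. n \<noteq> 0 \<and> (\<forall>i<N. n \<bullet> v i = 0))"
    then have np: "\<not> in_common_plane" unfolding in_common_plane_def .
    show "connected (S_set v N)"
      using S_set_eq_if_not_in_common_plane[OF np] connected_support_point_generic by simp
    show "\<forall>i<N. \<forall>j<N. \<forall>s t. (i, s) \<noteq> (j, t) \<longrightarrow> bdisc v N i s \<inter> bdisc v N j t = {}"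
      by (intro allI impI bdisc_disjoint[OF np])
  qed
qed

end
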